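(* Consider a mobile robot with perfectly known state $x^R$ and known deterministic discrete-time dynamics $x^R_{t+1}=f^R(x^R_t,u_t)$, navigating a static but initially unmapped environment $\mathcal{W}\subseteq\mathbb{R}^3$. The robot's onboard perception conservatively identifies free regions and adds them to a known free space $\mathcal{W}^{\text{free}}(\eta_t)\subseteq\mathcal{W}$ at each time $t$, where $\eta_t$ is the robot's information state. Fix a horizon $H\ge1$ and a braking input $u^{\text{brake}}$, used as fallback policy $\pi^{\text{shield}}(\eta)\equiv u^{\text{brake}}$. Consider the model-predictive safety filter which, given a candidate action $u$ at information state $\eta$, lets $u$ through if applying $u$ and then $u^{\text{brake}}$ for the next $H-1$ steps brings the robot to a full stop while its position remains within the currently known free space $\mathcal{W}^{\text{free}}(\eta)$, and otherwise overrides $u$ with $u^{\text{brake}}$. Then, for every task policy, this filter maintains safety (the robot never collides with an obstacle) from any deployment information state $\eta_0$ in which the robot is at rest within the initially known free space $\mathcal{W}^{\text{free}}(\eta_0)$.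
   Context: "Conservatively identifies free regions" means that every point of $\mathcal{W}^{\text{free}}(\eta_t)$ is truly obstacle-free, and the known free space never shrinks: $\mathcal{W}^{\text{free}}(\eta_{t+1})\supseteq\mathcal{W}^{\text{free}}(\eta_t)$. A robot at a full stop (at rest) remains at rest at the same position when $u^{\text{brake}}$ is applied. Collision means the robot's position lies outside the true obstacle-free space; in particular a position inside the known free space is collision-free. *)

theory Defs
  imports "HOL-Analysis.Analysis"
begin

definition brake_rollout :: "('x \<Rightarrow> 'u \<Rightarrow> 'x) \<Rightarrow> 'u \<Rightarrow> nat \<Rightarrow> 'x \<Rightarrow> 'x" where
  "brake_rollout f ub k y = ((\<lambda>z. f z ub) ^^ k) y"

definition mps_certified ::
  "('x \<Rightarrow> 'u \<Rightarrow> 'x) \<Rightarrow> ('x \<Rightarrow> real^3) \<Rightarrow> ('x \<Rightarrow> bool) \<Rightarrow> 'u \<Rightarrow> nat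
   \<Rightarrow> (real^3) set \<Rightarrow> 'x \<Rightarrow> 'u \<Rightarrow> bool" where
  "mps_certified f pos at_rest ub H F x u \<longleftrightarrow>
     at_rest (brake_rollout f ub (H - 1) (f x u)) \<and>
     (\<forall>k < H. pos (brake_rollout f ub k (f x u)) \<in> F)"

definition mps_filter ::
  "('x \<Rightarrow> 'u \<Rightarrow> 'x) \<Rightarrow> ('x \<Rightarrow> real^3) \<Rightarrow> ('x \<Rightarrow> bool) \<Rightarrow> 'u \<Rightarrow> nat
   \<Rightarrow> ('i \<Rightarrow> (real^3) set) \<Rightarrow> 'x \<Rightarrow> 'i \<Rightarrow> 'u \<Rightarrow> 'u" where
  "mps_filter f pos at_rest ub H Wfree x \<eta> u =
     (if mps_certified f pos at_rest ub H (Wfree \<eta>) x u then u else ub)"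

end

theory Submission
  imports Defs
begin

text \<open>The invariant is that the current state can be brought to rest by braking alone
  while staying in the currently known free space. It holds initially (the robot is at
  rest there), it survives an accepted action because the certificate is exactly such a
  braking rollout, it survives an override because braking only shortens the remaining
  rollout (or keeps a resting robot in place), and it survives map updates because the
  known free space only grows. Since the rollout starts at the current state, the
  invariant places the robot in the known free space, which contains no obstacles.\<close>

definition brake_stoppable_in ::
  "('x \<Rightarrow> 'u \<Rightarrow> 'x) \<Rightarrow> ('x \<Rightarrow> 'p) \<Rightarrow> ('x \<Rightarrow> bool) \<Rightarrow> 'u \<Rightarrow> 'p set \<Rightarrow> 'x \<Rightarrow> bool" where
  "brake_stoppable_in f pos at_rest ub F y \<longleftrightarrow>
     (\<exists>m. at_rest (brake_rollout f ub m y) \<and> (\<forall>k\<le>m. pos (brake_rollout f ub k y) \<in> F))"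

lemma brake_rollout_0 [simp]: "brake_rollout f ub 0 y = y"
  unfolding brake_rollout_def by simp

lemma brake_rollout_Suc: "brake_rollout f ub (Suc k) y = brake_rollout f ub k (f y ub)"
  unfolding brake_rollout_def by (simp add: funpow_Suc_right del: funpow.simps)

lemma brake_stoppable_in_mono:
  "F \<subseteq> G \<Longrightarrow> brake_stoppable_in f pos at_rest ub F y \<Longrightarrow> brake_stoppable_in f pos at_rest ub G y"
  unfolding brake_stoppable_in_def by blast

lemma brake_stoppable_in_imp_pos_in:
  "brake_stoppable_in f pos at_rest ub F y \<Longrightarrow> pos y \<in> F"
  unfolding brake_stoppable_in_def by (metis brake_rollout_0 le0)

lemma brake_stoppable_in_if_at_rest:
  "at_rest y \<Longrightarrow> pos y \<in> F \<Longrightarrow> brake_stoppable_in f pos at_rest ub F y"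
  unfolding brake_stoppable_in_def by (intro exI[of _ 0]) simp

lemma brake_stoppable_in_if_certified:
  assumes "H \<ge> 1" and "mps_certified f pos at_rest ub H F y u"
  shows "brake_stoppable_in f pos at_rest ub F (f y u)"
  unfolding brake_stoppable_in_def
proof (intro exI conjI allI impI)
  show "at_rest (brake_rollout f ub (H - 1) (f y u))"
    using assms(2) unfolding mps_certified_def by blast
  fix k assume "k \<le> H - 1"
  with \<open>H \<ge> 1\<close> have "k < H" by linarith
  then show "pos (brake_rollout f ub k (f y u)) \<in> F"
    using assms(2) unfolding mps_certified_def by blast
qed

lemma brake_stoppable_in_brake_step:
  assumes brake_rest: "\<And>z. at_rest z \<Longrightarrow> f z ub = z"
    and stoppable: "brake_stoppable_in f pos at_rest ub F y"
  shows "brake_stoppable_in f pos at_rest ub F (f y ub)"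
proof -
  from stoppable obtain m where rest: "at_rest (brake_rollout f ub m y)"
    and free: "\<forall>k\<le>m. pos (brake_rollout f ub k y) \<in> F"
    unfolding brake_stoppable_in_def by blast
  show ?thesis
  proof (cases m)
    case 0
    with rest brake_rest have "f y ub = y" by simp
    with stoppable show ?thesis by simp
  next
    case (Suc m')
    with rest free show ?thesis
      unfolding brake_stoppable_in_def brake_rollout_Suc[symmetric]
      by (intro exI[of _ m']) auto
  qed
qed

lemma brake_stoppable_in_filter_step:
  assumes "H \<ge> 1"
    and "\<And>z. at_rest z \<Longrightarrow> f z ub = z"
    and "brake_stoppable_in f pos at_rest ub (Wfree \<eta>) y"
  shows "brake_stoppable_in f pos at_rest ub (Wfree \<eta>)
           (f y (mps_filter f pos at_rest ub H Wfree y \<eta> u))"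
  using assms brake_stoppable_in_if_certified[of H] brake_stoppable_in_brake_step[of at_rest f ub]
  unfolding mps_filter_def by auto

theorem corollary4:
  fixes f :: "'x \<Rightarrow> 'u \<Rightarrow> 'x"
    and pos :: "'x \<Rightarrow> real^3"
    and at_rest :: "'x \<Rightarrow> bool"
    and ub :: 'u
    and H :: nat
    and W :: "(real^3) set"
    and Wfree :: "'i \<Rightarrow> (real^3) set"
    and \<pi> :: "'i \<Rightarrow> 'u"
    and \<eta> :: "nat \<Rightarrow> 'i"
    and x :: "nat \<Rightarrow> 'x"
  assumes H: "H \<ge> 1"
    and brake_rest: "\<And>y. at_rest y \<Longrightarrow> f y ub = y"
    and conservative: "\<And>t. Wfree (\<eta> t) \<subseteq> W"
    and monotone: "\<And>t. Wfree (\<eta> t) \<subseteq> Wfree (\<eta> (Suc t))"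
    and dyn: "\<And>t. x (Suc t) = f (x t) (mps_filter f pos at_rest ub H Wfree (x t) (\<eta> t) (\<pi> (\<eta> t)))"
    and init_rest: "at_rest (x 0)"
    and init_free: "pos (x 0) \<in> Wfree (\<eta> 0)"
  shows "\<forall>t. pos (x t) \<in> W"
proof
  fix t
  have "brake_stoppable_in f pos at_rest ub (Wfree (\<eta> t)) (x t)"
  proof (induction t)
    case 0
    from init_rest init_free show ?case by (rule brake_stoppable_in_if_at_rest)
  next
    case (Suc t)
    with H brake_rest have "brake_stoppable_in f pos at_rest ub (Wfree (\<eta> t)) (x (Suc t))"
      unfolding dyn by (rule brake_stoppable_in_filter_step)
    with monotone show ?case by (rule brake_stoppable_in_mono)
  qed
  then have "pos (x t) \<in> Wfree (\<eta> t)" by (rule brake_stoppable_in_imp_pos_in)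
  with conservative show "pos (x t) \<in> W" by blast
qed

end
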